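(* Let $T$ be a parity decision tree on $\{-1,1\}^n$ and let $T'$ be any refinement of $T$. Then $$\mathbf{E}_{\ell\in T}\Big(\sum_{i=1}^n\ell_i\Big)^2\le \mathbf{E}_{\ell'\in T'}\Big(\sum_{i=1}^n\ell'_i\Big)^2.$$
   Context: A parity decision tree on $\{-1,1\}^n$ is a rooted full binary tree whose internal nodes are labelled by subsets $S\subseteq[n]$, whose two outgoing edges are labelled $-1$ and $1$; an input $x$ follows from a node labelled $S$ the edge labelled $\prod_{i\in S}x_i$. A refinement of $T$ is a parity decision tree obtained from $T$ by replacing leaves with (parity decision) subtrees. Each leaf is represented as a vector $\ell\in\{-1,0,1\}^n$ with $\ell_i$ the expected value of $x_i$ over uniformly random inputs reaching that leaf; $\mathbf{E}_{\ell\in T}$ is the expectation over the leaf reached by a uniformly random input $x\in\{-1,1\}^n$. *)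

theory Defs
  imports "HOL-Library.FuncSet" Complex_Main
begin

text \<open>Parity decision trees: a leaf, or a node labelled by a set S of coordinates
  with a child for the edge labelled -1 (first) and one for the edge labelled 1 (second).\<close>
datatype pdt = Leaf | Node "nat set" pdt pdt

fun wf_pdt :: "nat \<Rightarrow> pdt \<Rightarrow> bool" where
  "wf_pdt n Leaf = True"
| "wf_pdt n (Node S l r) = (S \<subseteq> {1..n} \<and> wf_pdt n l \<and> wf_pdt n r)"

definition cube :: "nat \<Rightarrow> (nat \<Rightarrow> real) set" where
  "cube n = ({1..n} \<rightarrow>\<^sub>E {-1, 1})"

definition parity :: "nat set \<Rightarrow> (nat \<Rightarrow> real) \<Rightarrow> real" where
  "parity S x = (\<Prod>i\<in>S. x i)"

text \<open>The leaf reached by input x, encoded as the path from the root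
  (False = edge -1, True = edge 1).\<close>
fun reach :: "pdt \<Rightarrow> (nat \<Rightarrow> real) \<Rightarrow> bool list" where
  "reach Leaf x = []"
| "reach (Node S l r) x =
     (if parity S x = -1 then False # reach l x else True # reach r x)"

text \<open>T' is a refinement of T: obtained from T by replacing leaves by subtrees.\<close>
fun refines :: "pdt \<Rightarrow> pdt \<Rightarrow> bool" where
  "refines T' Leaf = True"
| "refines Leaf (Node S l r) = False"
| "refines (Node S' l' r') (Node S l r) = (S' = S \<and> refines l' l \<and> refines r' r)"

definition leaf_vec :: "nat \<Rightarrow> pdt \<Rightarrow> (nat \<Rightarrow> real) \<Rightarrow> nat \<Rightarrow> real" where
  "leaf_vec n T x i =
     (let L = {y \<in> cube n. reach T y = reach T x} in (\<Sum>y\<in>L. y i) / real (card L))"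

definition leaf_exp :: "nat \<Rightarrow> pdt \<Rightarrow> ((nat \<Rightarrow> real) \<Rightarrow> real) \<Rightarrow> real" where
  "leaf_exp n T f = (\<Sum>x\<in>cube n. f (leaf_vec n T x)) / 2 ^ n"

end

theory Submission
  imports Defs
begin

text \<open>The leaf vector of x is the average of y over the inputs y reaching the same leaf, so
  \<open>\<Sum>\<^sub>i \<ell>\<^sub>i\<close> is the conditional expectation of \<open>f(y) = \<Sum>\<^sub>i y\<^sub>i\<close> given the leaf, and the theorem
  says that the second moment of conditional expectations grows when the partition into leaves
  is refined. If g is constant on the fibres of h, then averaging over the fibres of h is
  self-adjoint and fixes the fibre average of g, so \<open>\<Sum> avg\<^sub>g f \<cdot> avg\<^sub>h f = \<Sum> (avg\<^sub>g f)\<^sup>2\<close>; expanding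
  \<open>0 \<le> \<Sum> (avg\<^sub>h f - avg\<^sub>g f)\<^sup>2\<close> gives \<open>\<Sum> (avg\<^sub>g f)\<^sup>2 \<le> \<Sum> (avg\<^sub>h f)\<^sup>2\<close>.\<close>

definition fibre_avg :: "'a set \<Rightarrow> ('a \<Rightarrow> 'b) \<Rightarrow> ('a \<Rightarrow> real) \<Rightarrow> 'a \<Rightarrow> real" where
  "fibre_avg C h f x = (\<Sum>y\<in>{y\<in>C. h y = h x}. f y) / real (card {y\<in>C. h y = h x})"

lemma fibre_avg_cong: "h x = h y \<Longrightarrow> fibre_avg C h f x = fibre_avg C h f y"
  unfolding fibre_avg_def by simp

lemma sum_mult_fibre_avg:
  assumes fin: "finite C"
    and fibre_const: "\<And>x y. x \<in> C \<Longrightarrow> y \<in> C \<Longrightarrow> h x = h y \<Longrightarrow> \<phi> x = \<phi> y"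
  shows "(\<Sum>x\<in>C. \<phi> x * fibre_avg C h f x) = (\<Sum>x\<in>C. \<phi> x * f x)"
proof -
  define A where "A x = {y\<in>C. h y = h x}" for x
  have "(\<Sum>x\<in>C. \<phi> x * fibre_avg C h f x) = (\<Sum>x\<in>C. \<Sum>y\<in>A x. \<phi> y * f y / card (A y))"
  proof (rule sum.cong[OF refl])
    fix x assume "x \<in> C"
    then have "A y = A x" "\<phi> y = \<phi> x" if "y \<in> A x" for y
      using that fibre_const[of y x] by (auto simp: A_def)
    then show "\<phi> x * fibre_avg C h f x = (\<Sum>y\<in>A x. \<phi> y * f y / card (A y))"
      by (simp add: fibre_avg_def A_def[symmetric] sum_distrib_left sum_divide_distrib)
  qed
  also have "\<dots> = (\<Sum>y\<in>C. \<Sum>x\<in>A y. \<phi> y * f y / card (A y))"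
    using sum.swap_restrict[OF fin fin, of "\<lambda>x y. \<phi> y * f y / card (A y)" "\<lambda>x y. h y = h x"]
    by (simp add: A_def eq_commute)
  also have "\<dots> = (\<Sum>y\<in>C. \<phi> y * f y)"
  proof (rule sum.cong[OF refl])
    fix y assume "y \<in> C"
    then have "card (A y) > 0"
      using fin by (auto simp: A_def card_gt_0_iff)
    then show "(\<Sum>x\<in>A y. \<phi> y * f y / card (A y)) = \<phi> y * f y" by simp
  qed
  finally show ?thesis .
qed

lemma sum_fibre_avg_square_mono:
  assumes fin: "finite C"
    and finer: "\<And>x y. x \<in> C \<Longrightarrow> y \<in> C \<Longrightarrow> h x = h y \<Longrightarrow> g x = g y"
  shows "(\<Sum>x\<in>C. (fibre_avg C g f x)^2) \<le> (\<Sum>x\<in>C. (fibre_avg C h f x)^2)"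
proof -
  let ?g = "fibre_avg C g f" and ?h = "fibre_avg C h f"
  have mixed: "(\<Sum>x\<in>C. ?g x * ?h x) = (\<Sum>x\<in>C. ?g x * f x)"
    using fin by (rule sum_mult_fibre_avg) (metis fibre_avg_cong finer)
  have square: "(\<Sum>x\<in>C. ?g x * ?g x) = (\<Sum>x\<in>C. ?g x * f x)"
    using fin by (rule sum_mult_fibre_avg) (metis fibre_avg_cong)
  have "0 \<le> (\<Sum>x\<in>C. (?h x - ?g x)^2)"
    by (simp add: sum_nonneg)
  also have "\<dots> = (\<Sum>x\<in>C. (?h x)^2) - 2 * (\<Sum>x\<in>C. ?g x * ?h x) + (\<Sum>x\<in>C. ?g x * ?g x)"
    by (simp add: power2_diff sum.distrib sum_subtractf sum_distrib_left power2_eq_square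
        algebra_simps)
  finally show ?thesis
    using mixed square by (simp add: power2_eq_square)
qed

lemma reach_eq_if_refines:
  "refines T' T \<Longrightarrow> reach T' x = reach T' y \<Longrightarrow> reach T x = reach T y"
  by (induction T' T rule: refines.induct) (auto split: if_splits)

lemma leaf_exp_square_sum_eq:
  "leaf_exp n T (\<lambda>l. (\<Sum>i=1..n. l i)^2)
     = (\<Sum>x\<in>cube n. (fibre_avg (cube n) (reach T) (\<lambda>y. \<Sum>i=1..n. y i) x)^2) / 2^n"
proof -
  have "(\<Sum>i=1..n. leaf_vec n T x i) = fibre_avg (cube n) (reach T) (\<lambda>y. \<Sum>i=1..n. y i) x" for x
    unfolding leaf_vec_def fibre_avg_def Let_def
    by (simp only: sum_divide_distrib[symmetric]) (simp only: sum.swap[of _ "{1..n}"])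
  then show ?thesis
    unfolding leaf_exp_def by simp
qed

lemma finite_cube: "finite (cube n)"
  unfolding cube_def by (rule finite_PiE) auto

theorem proposition3:
  fixes n :: nat and T T' :: pdt
  assumes "wf_pdt n T" and "wf_pdt n T'" and "refines T' T"
  shows "leaf_exp n T (\<lambda>l. (\<Sum>i=1..n. l i)^2) \<le> leaf_exp n T' (\<lambda>l. (\<Sum>i=1..n. l i)^2)"
proof -
  have "(\<Sum>x\<in>cube n. (fibre_avg (cube n) (reach T) (\<lambda>y. \<Sum>i=1..n. y i) x)^2)
      \<le> (\<Sum>x\<in>cube n. (fibre_avg (cube n) (reach T') (\<lambda>y. \<Sum>i=1..n. y i) x)^2)"
    using finite_cube reach_eq_if_refines[OF assms(3)] by (rule sum_fibre_avg_square_mono)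
  then show ?thesis
    unfolding leaf_exp_square_sum_eq by (simp add: divide_right_mono)
qed

end
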